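(* Let $M$ be a finite-dimensional left $\mathsf{VBr}_{r,t}(\omega)$-module, $\mathbf a\in\mathrm{Seq}_{r,t}$, $\mathbf i\in\mathbb C^{r+t}$ and $k\in\{1,\dots,r+t-1\}$. Suppose that either (a) $a_k=a_{k+1}$, $\mathrm i_{k+1}\notin\{\mathrm i_k,\mathrm i_k+1,\mathrm i_k-1\}$ and $(y_k-\mathrm i_{k+1})1_{\mathbf a}M_{\mathsf s_k\mathbf i}=0$; or (b) $a_k\ne a_{k+1}$, $\mathrm i_k+\mathrm i_{k+1}\ne0$ and $(y_k-\mathrm i_{k+1})1_{\mathsf s_k\mathbf a}M_{\mathsf s_k\mathbf i}=0$. Then $(y_{k+1}-\mathrm i_{k+1})1_{\mathbf a}M_{\mathbf i}=0$.
   Context: $\mathrm{Seq}_{r,t}$: sequences $\mathbf a\in\{\wedge,\vee\}^{r+t}$ with exactly $r$ entries $\wedge$; $J=\{1,\dots,r+t-1\}$; $\mathsf s_k$ swaps entries $k,k+1$ (of sequences and of vectors in $\mathbb C^{r+t}$). $\mathrm{Br}_{r,t}(\gamma)$: basis oriented Brauer diagrams $\mathbf a\to\mathbf b$ (perfect matchings between bottom row labelled $\mathbf a$ and top row labelled $\mathbf b$; bottom-to-top strands join equal labels, strands within a row join different labels), product by stacking (second factor below), $0$ if labels mismatch, loops replaced by $\gamma$. $1_{\mathbf a}$ identity; for $k\in J$: if $a_k=a_{k+1}$, $s_k1_{\mathbf a}$ crosses strands $k,k+1$ ($\mathbf a\to\mathbf a$); if $a_k\neq a_{k+1}$, $\hat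 s_k1_{\mathbf a}$ crossing $\mathbf a\to\mathsf s_k\mathbf a$, $e_k1_{\mathbf a}$ cap at bottom $k,k+1$ and cup at top $k,k+1$ ($\mathbf a\to\mathbf a$), $\hat e_k1_{\mathbf a}$ same shape $\mathbf a\to\mathsf s_k\mathbf a$; these are $0$ when the condition fails; $s_k=\sum_{\mathbf a}s_k1_{\mathbf a}$ etc. For $\omega=(\omega_j)_{j\ge0}\subset\mathbb C$, $\mathsf{VBr}_{r,t}(\omega)$ is the quotient of the free product $\mathrm{Br}_{r,t}(\omega_0)*\mathbb C[y_1,\dots,y_{r+t}]$ by: $y_i$ commutes with all $1_{\mathbf a}$, and with $s_k,\hat s_k,e_k,\hat e_k$ when $i\notin\{k,k+1\}$; $e_1y_1^je_11_{\mathbf a}=\omega_je_11_{\mathbf a}$ for $j\ge0$ and $(a_1,a_2)=(\wedge,\vee)$; for $a_k=a_{k+1}$: $s_ky_k1_{\mathbf a}-y_{k+1}s_k1_{\mathbf a}=-1_{\mathbf a}$, $s_ky_{k+1}1_{\mathbf a}-y_ks_k1_{\mathbf a}=1_{\mathbf a}$; $\hat s_ky_k-y_{k+1}\hat s_k=\hat e_k$, $\hat s_ky_{k+1}-y_k\hat s_k=-\hat e_k$; $e_k,\hat e_k$ are annihilated on both sides by $y_k+y_{k+1}$. $1_{\mathbf a}M_{\mathbf i}=\{v\in1_{\mathbf a}M:(y_k-\mathrm i_k)^Nv=0\ \forall k,\ N\gg0\}$ (generalized simultaneous eigenspace). *)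

theory Defs
  imports Complex_Main
begin

(* Conventions: True encodes \<wedge>, False encodes \<vee>.
   Positions are 1-based as in the paper: entry k of a sequence a is a ! (k - 1),
   entry k of a vector i \<in> C^(r+t) is i k (for i :: nat \<Rightarrow> complex, only 1..r+t matter). *)

definition Seq :: "nat \<Rightarrow> nat \<Rightarrow> bool list set" where
  "Seq r t = {a. length a = r + t \<and> length (filter id a) = r}"

definition ent :: "bool list \<Rightarrow> nat \<Rightarrow> bool" where
  "ent a k = a ! (k - 1)"

definition swp :: "nat \<Rightarrow> bool list \<Rightarrow> bool list" where
  "swp k a = a[k - 1 := a ! k, k := a ! (k - 1)]"

definition swpv :: "nat \<Rightarrow> (nat \<Rightarrow> complex) \<Rightarrow> (nat \<Rightarrow> complex)" where
  "swpv k i = i(k := i (k + 1), k + 1 := i k)"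

datatype pt = Bt nat | Tp nat

fun inr :: "nat \<Rightarrow> pt \<Rightarrow> bool" where
  "inr n (Bt i) = (1 \<le> i \<and> i \<le> n)"
| "inr n (Tp i) = (1 \<le> i \<and> i \<le> n)"

fun same_row :: "pt \<Rightarrow> pt \<Rightarrow> bool" where
  "same_row (Bt _) (Bt _) = True"
| "same_row (Tp _) (Tp _) = True"
| "same_row _ _ = False"

fun lbl :: "bool list \<Rightarrow> bool list \<Rightarrow> pt \<Rightarrow> bool" where
  "lbl a b (Bt i) = ent a i"
| "lbl a b (Tp i) = ent b i"

(* a diagram a \<rightarrow> b: (bottom labels a, top labels b, perfect matching m given as a
   fixed-point-free involution on the 2n points, identity outside them) *)
type_synonym diag = "bool list \<times> bool list \<times> (pt \<Rightarrow> pt)"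

fun dsrc :: "diag \<Rightarrow> bool list" where "dsrc (a, b, m) = a"
fun dtgt :: "diag \<Rightarrow> bool list" where "dtgt (a, b, m) = b"

definition Br :: "nat \<Rightarrow> nat \<Rightarrow> diag set" where
  "Br r t = {(a, b, m). a \<in> Seq r t \<and> b \<in> Seq r t \<and>
     (\<forall>p. inr (r + t) p \<longrightarrow>
          inr (r + t) (m p) \<and> m p \<noteq> p \<and> m (m p) = p \<and>
          (if same_row p (m p) then lbl a b p \<noteq> lbl a b (m p)
           else lbl a b p = lbl a b (m p))) \<and>
     (\<forall>p. \<not> inr (r + t) p \<longrightarrow> m p = p)}"

(* stacking: d1 on top of d2 (product d1 d2, second factor below) *)
datatype lv = L0 nat | L1 nat | L2 nat

fun embLow :: "pt \<Rightarrow> lv" where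
  "embLow (Bt i) = L0 i" | "embLow (Tp i) = L1 i"
fun embUp :: "pt \<Rightarrow> lv" where
  "embUp (Bt i) = L1 i" | "embUp (Tp i) = L2 i"
fun embOut :: "pt \<Rightarrow> lv" where
  "embOut (Bt i) = L0 i" | "embOut (Tp i) = L2 i"

definition stack_edges :: "nat \<Rightarrow> (pt \<Rightarrow> pt) \<Rightarrow> (pt \<Rightarrow> pt) \<Rightarrow> (lv \<times> lv) set" where
  "stack_edges n m1 m2 =
     {(embLow p, embLow (m2 p)) | p. inr n p} \<union> {(embUp p, embUp (m1 p)) | p. inr n p}"

definition comp_match :: "nat \<Rightarrow> (pt \<Rightarrow> pt) \<Rightarrow> (pt \<Rightarrow> pt) \<Rightarrow> pt \<Rightarrow> pt" where
  "comp_match n m1 m2 p =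
     (if inr n p then (THE q. inr n q \<and> q \<noteq> p \<and>
                         (embOut p, embOut q) \<in> (stack_edges n m1 m2)\<^sup>*)
      else p)"

(* number of closed loops created in the middle row *)
definition nloops :: "nat \<Rightarrow> (pt \<Rightarrow> pt) \<Rightarrow> (pt \<Rightarrow> pt) \<Rightarrow> nat" where
  "nloops n m1 m2 =
     (let R = (stack_edges n m1 m2)\<^sup>*;
          F = {L1 i | i. 1 \<le> i \<and> i \<le> n \<and> \<not> (\<exists>p. inr n p \<and> (L1 i, embOut p) \<in> R)}
      in card ((\<lambda>x. R `` {x}) ` F))"

fun dcomp :: "diag \<Rightarrow> diag \<Rightarrow> diag" where
  "dcomp (a1, b1, m1) (a2, b2, m2) = (a2, b1, comp_match (length a2) m1 m2)"

fun dloops :: "diag \<Rightarrow> diag \<Rightarrow> nat" where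
  "dloops (a1, b1, m1) (a2, b2, m2) = nloops (length a2) m1 m2"

fun flip :: "pt \<Rightarrow> pt" where "flip (Bt i) = Tp i" | "flip (Tp i) = Bt i"

definition idm :: "nat \<Rightarrow> pt \<Rightarrow> pt" where
  "idm n p = (if inr n p then flip p else p)"

definition crossm :: "nat \<Rightarrow> nat \<Rightarrow> pt \<Rightarrow> pt" where
  "crossm n k p =
     (if p = Bt k then Tp (k + 1) else if p = Bt (k + 1) then Tp k
      else if p = Tp k then Bt (k + 1) else if p = Tp (k + 1) then Bt k
      else idm n p)"

definition capm :: "nat \<Rightarrow> nat \<Rightarrow> pt \<Rightarrow> pt" where
  "capm n k p =
     (if p = Bt k then Bt (k + 1) else if p = Bt (k + 1) then Bt k
      else if p = Tp k then Tp (k + 1) else if p = Tp (k + 1) then Tp k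
      else idm n p)"

definition d_one :: "bool list \<Rightarrow> diag" where
  "d_one a = (a, a, idm (length a))"
definition d_s :: "nat \<Rightarrow> bool list \<Rightarrow> diag" where      (* s_k 1_a, a_k = a_{k+1} *)
  "d_s k a = (a, a, crossm (length a) k)"
definition d_shat :: "nat \<Rightarrow> bool list \<Rightarrow> diag" where   (* \<hat>s_k 1_a, a_k \<noteq> a_{k+1} *)
  "d_shat k a = (a, swp k a, crossm (length a) k)"
definition d_e :: "nat \<Rightarrow> bool list \<Rightarrow> diag" where      (* e_k 1_a, a_k \<noteq> a_{k+1} *)
  "d_e k a = (a, a, capm (length a) k)"
definition d_ehat :: "nat \<Rightarrow> bool list \<Rightarrow> diag" where   (* \<hat>e_k 1_a, a_k \<noteq> a_{k+1} *)
  "d_ehat k a = (a, swp k a, capm (length a) k)"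

definition opS :: "nat \<Rightarrow> nat \<Rightarrow> (diag \<Rightarrow> 'v \<Rightarrow> 'v::ab_group_add) \<Rightarrow> nat \<Rightarrow> 'v \<Rightarrow> 'v" where
  "opS r t act k v = (\<Sum>b\<in>{b\<in>Seq r t. ent b k = ent b (k + 1)}. act (d_s k b) v)"
definition opShat :: "nat \<Rightarrow> nat \<Rightarrow> (diag \<Rightarrow> 'v \<Rightarrow> 'v::ab_group_add) \<Rightarrow> nat \<Rightarrow> 'v \<Rightarrow> 'v" where
  "opShat r t act k v = (\<Sum>b\<in>{b\<in>Seq r t. ent b k \<noteq> ent b (k + 1)}. act (d_shat k b) v)"
definition opE :: "nat \<Rightarrow> nat \<Rightarrow> (diag \<Rightarrow> 'v \<Rightarrow> 'v::ab_group_add) \<Rightarrow> nat \<Rightarrow> 'v \<Rightarrow> 'v" where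
  "opE r t act k v = (\<Sum>b\<in>{b\<in>Seq r t. ent b k \<noteq> ent b (k + 1)}. act (d_e k b) v)"
definition opEhat :: "nat \<Rightarrow> nat \<Rightarrow> (diag \<Rightarrow> 'v \<Rightarrow> 'v::ab_group_add) \<Rightarrow> nat \<Rightarrow> 'v \<Rightarrow> 'v" where
  "opEhat r t act k v = (\<Sum>b\<in>{b\<in>Seq r t. ent b k \<noteq> ent b (k + 1)}. act (d_ehat k b) v)"

(* ---------- finite-dimensional left VBr_{r,t}(\<omega>)-modules ----------
   A module is a finite-dimensional complex vector space ('v, scl) with
   act d = action of the basis diagram d \<in> Br_{r,t}(\<omega>_0) (extended linearly, this is a
   unital algebra homomorphism Br \<rightarrow> End) and Y i = action of y_i, 1 \<le> i \<le> r+t,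
   subject to the defining relations of VBr. *)
definition VBr_module ::
  "nat \<Rightarrow> nat \<Rightarrow> (nat \<Rightarrow> complex) \<Rightarrow> (complex \<Rightarrow> 'v \<Rightarrow> 'v::ab_group_add) \<Rightarrow>
   (diag \<Rightarrow> 'v \<Rightarrow> 'v) \<Rightarrow> (nat \<Rightarrow> 'v \<Rightarrow> 'v) \<Rightarrow> bool" where
  "VBr_module r t \<omega> scl act Y \<longleftrightarrow>
     (let n = r + t; J = {1..<n}; SQ = Seq r t;
          S = opS r t act; Sh = opShat r t act; E = opE r t act; Eh = opEhat r t act in
     vector_space scl \<and> (\<exists>B. finite_dimensional_vector_space scl B) \<and>
     (\<forall>d\<in>Br r t. Vector_Spaces.linear scl scl (act d)) \<and>
     (\<forall>i\<in>{1..n}. Vector_Spaces.linear scl scl (Y i)) \<and>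
     \<comment> \<open>Br_{r,t}(\<omega>_0)-module: multiplicativity on basis diagrams and unit\<close>
     (\<forall>d1\<in>Br r t. \<forall>d2\<in>Br r t. \<forall>v.
        act d1 (act d2 v) =
          (if dtgt d2 = dsrc d1 then scl ((\<omega> 0) ^ dloops d1 d2) (act (dcomp d1 d2) v) else 0)) \<and>
     (\<forall>v. (\<Sum>a\<in>SQ. act (d_one a) v) = v) \<and>
     \<comment> \<open>C[y_1,...,y_n]-module\<close>
     (\<forall>i\<in>{1..n}. \<forall>j\<in>{1..n}. \<forall>v. Y i (Y j v) = Y j (Y i v)) \<and>
     \<comment> \<open>y_i commutes with all 1_a\<close>
     (\<forall>i\<in>{1..n}. \<forall>a\<in>SQ. \<forall>v. Y i (act (d_one a) v) = act (d_one a) (Y i v)) \<and>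
     \<comment> \<open>y_i commutes with s_k, \<hat>s_k, e_k, \<hat>e_k for i \<notin> {k,k+1}\<close>
     (\<forall>i\<in>{1..n}. \<forall>k\<in>J. i \<notin> {k, k + 1} \<longrightarrow> (\<forall>v.
        Y i (S k v) = S k (Y i v) \<and> Y i (Sh k v) = Sh k (Y i v) \<and>
        Y i (E k v) = E k (Y i v) \<and> Y i (Eh k v) = Eh k (Y i v))) \<and>
     \<comment> \<open>e_1 y_1^j e_1 1_a = \<omega>_j e_1 1_a for (a_1,a_2) = (\<wedge>,\<vee>)\<close>
     (\<forall>j. \<forall>a\<in>SQ. n \<ge> 2 \<and> ent a 1 = True \<and> ent a 2 = False \<longrightarrow> (\<forall>v.
        E 1 ((Y 1 ^^ j) (E 1 (act (d_one a) v))) = scl (\<omega> j) (E 1 (act (d_one a) v)))) \<and>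
     \<comment> \<open>relations for a_k = a_{k+1}\<close>
     (\<forall>k\<in>J. \<forall>a\<in>SQ. ent a k = ent a (k + 1) \<longrightarrow> (\<forall>v.
        S k (Y k (act (d_one a) v)) - Y (k + 1) (S k (act (d_one a) v)) = - act (d_one a) v \<and>
        S k (Y (k + 1) (act (d_one a) v)) - Y k (S k (act (d_one a) v)) = act (d_one a) v)) \<and>
     \<comment> \<open>relations for \<hat>s_k\<close>
     (\<forall>k\<in>J. \<forall>v.
        Sh k (Y k v) - Y (k + 1) (Sh k v) = Eh k v \<and>
        Sh k (Y (k + 1) v) - Y k (Sh k v) = - Eh k v) \<and>
     \<comment> \<open>e_k, \<hat>e_k annihilated on both sides by y_k + y_{k+1}\<close>
     (\<forall>k\<in>J. \<forall>v.
        E k (Y k v + Y (k + 1) v) = 0 \<and> Y k (E k v) + Y (k + 1) (E k v) = 0 \<and>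
        Eh k (Y k v + Y (k + 1) v) = 0 \<and> Y k (Eh k v) + Y (k + 1) (Eh k v) = 0))"

definition gen_eig ::
  "nat \<Rightarrow> (complex \<Rightarrow> 'v \<Rightarrow> 'v::ab_group_add) \<Rightarrow> (diag \<Rightarrow> 'v \<Rightarrow> 'v) \<Rightarrow> (nat \<Rightarrow> 'v \<Rightarrow> 'v) \<Rightarrow>
   bool list \<Rightarrow> (nat \<Rightarrow> complex) \<Rightarrow> 'v set" where
  "gen_eig n scl act Y a i =
     {v. v \<in> range (act (d_one a)) \<and>
         (\<exists>N. \<forall>k\<in>{1..n}. ((\<lambda>w. Y k w - scl (i k) w) ^^ N) v = 0)}"

end

theory Submission
  imports Defs "HOL-Library.Multiset" "HOL-Combinatorics.Transposition"
begin

(* For v in 1_a M_i put w = (y_(k+1) - i_(k+1)) v. One builds an intertwiner phi on 1_a M with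
   y_j phi = phi y_(s_k j), namely phi = s_k (y_k - y_(k+1)) + 1 in case (a) and
   phi = \<hat>s_k (y_k + y_(k+1)) in case (b). It maps 1_a M_i into 1_b M_(s_k i) (b = a, resp. s_k a),
   so the hypothesis yields phi w = 0.
   In case (b), \<hat>s_k is invertible, hence (y_k + y_(k+1)) w = 0; but y_k + y_(k+1) acts on w with
   the single generalised eigenvalue i_k + i_(k+1) <> 0, so w = 0.
   In case (a), s_k^2 = 1 and the relations between s_k and the y's turn phi w = 0 into D^2 w = w for
   D = y_k - y_(k+1). So D has eigenvalues +-1 on span {w, D w}, whereas its only generalised
   eigenvalue there is i_k - i_(k+1), which is neither 1 nor -1; again w = 0. *)

section \<open>Permutation diagrams and sequences\<close>

definition involution_on :: "nat \<Rightarrow> (nat \<Rightarrow> nat) \<Rightarrow> bool" where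
  "involution_on n \<sigma> \<longleftrightarrow> (\<forall>j. \<sigma> (\<sigma> j) = j) \<and> (\<forall>j. 1 \<le> j \<and> j \<le> n \<longrightarrow> 1 \<le> \<sigma> j \<and> \<sigma> j \<le> n)"

text \<open>The permutation diagram of \<open>\<sigma>\<close> joins bottom point \<open>i\<close> to top point \<open>\<sigma> i\<close>; this is a
  matching only for involutions, which is all the generators \<open>1_a\<close>, \<open>s_k\<close>, \<open>\<hat>s_k\<close> need.\<close>

definition perm_match :: "nat \<Rightarrow> (nat \<Rightarrow> nat) \<Rightarrow> pt \<Rightarrow> pt" where
  "perm_match n \<sigma> p =
     (if inr n p then (case p of Bt i \<Rightarrow> Tp (\<sigma> i) | Tp j \<Rightarrow> Bt (\<sigma> j)) else p)"

text \<open>In the stack of the permutation diagrams of \<open>\<sigma>\<close> (below) and \<open>\<tau>\<close> (above), every point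
  lies on the strand through the bottom point \<open>bottom_index \<sigma> \<tau>\<close>.\<close>

fun bottom_index :: "(nat \<Rightarrow> nat) \<Rightarrow> (nat \<Rightarrow> nat) \<Rightarrow> lv \<Rightarrow> nat" where
  "bottom_index \<sigma> \<tau> (L0 i) = i"
| "bottom_index \<sigma> \<tau> (L1 j) = \<sigma> j"
| "bottom_index \<sigma> \<tau> (L2 l) = \<sigma> (\<tau> l)"

lemma stack_edge_bottom_index:
  assumes "involution_on n \<sigma>" "involution_on n \<tau>"
    and "(x, y) \<in> stack_edges n (perm_match n \<tau>) (perm_match n \<sigma>)"
  shows "bottom_index \<sigma> \<tau> x = bottom_index \<sigma> \<tau> y"
  using assms unfolding stack_edges_def involution_on_def
  by (auto simp: perm_match_def elim!: inr.elims)

lemma stack_path_bottom_index: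
  assumes "involution_on n \<sigma>" "involution_on n \<tau>"
    and "(x, y) \<in> (stack_edges n (perm_match n \<tau>) (perm_match n \<sigma>))\<^sup>*"
  shows "bottom_index \<sigma> \<tau> x = bottom_index \<sigma> \<tau> y"
  using assms(3) by induction (use stack_edge_bottom_index[OF assms(1,2)] in auto)

lemma stack_edges_lowerI: "inr n p \<Longrightarrow> (embLow p, embLow (lower p)) \<in> stack_edges n upper lower"
  unfolding stack_edges_def by blast

lemma stack_edges_upperI: "inr n p \<Longrightarrow> (embUp p, embUp (upper p)) \<in> stack_edges n upper lower"
  unfolding stack_edges_def by blast

lemma comp_match_perm_match:
  assumes \<sigma>: "involution_on n \<sigma>" and \<tau>: "involution_on n \<tau>"
    and \<rho>: "\<And>j. \<tau> (\<sigma> j) = \<rho> j" "\<And>j. \<sigma> (\<tau> j) = \<rho> j"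
  shows "comp_match n (perm_match n \<tau>) (perm_match n \<sigma>) = perm_match n \<rho>"
proof
  fix p
  let ?E = "stack_edges n (perm_match n \<tau>) (perm_match n \<sigma>)"
  show "comp_match n (perm_match n \<tau>) (perm_match n \<sigma>) p = perm_match n \<rho> p"
  proof (cases "inr n p")
    case False
    then show ?thesis by (simp add: comp_match_def perm_match_def)
  next
    case True
    have path: "(embOut p, embOut (perm_match n \<rho> p)) \<in> ?E\<^sup>*"
    proof (cases p)
      case (Bt i)
      then have "inr n (Bt i)" "inr n (Bt (\<sigma> i))" using True \<sigma> unfolding involution_on_def by auto
      then have "(L0 i, L1 (\<sigma> i)) \<in> ?E" "(L1 (\<sigma> i), L2 (\<rho> i)) \<in> ?E"
        using stack_edges_lowerI[of n "Bt i" "perm_match n \<sigma>" "perm_match n \<tau>"]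
          stack_edges_upperI[of n "Bt (\<sigma> i)" "perm_match n \<tau>" "perm_match n \<sigma>"] \<rho>(1)[of i]
        by (simp_all add: perm_match_def)
      then show ?thesis using Bt True by (simp add: perm_match_def)
    next
      case (Tp l)
      then have "inr n (Tp l)" "inr n (Tp (\<tau> l))" using True \<tau> unfolding involution_on_def by auto
      then have "(L2 l, L1 (\<tau> l)) \<in> ?E" "(L1 (\<tau> l), L0 (\<rho> l)) \<in> ?E"
        using stack_edges_upperI[of n "Tp l" "perm_match n \<tau>" "perm_match n \<sigma>"]
          stack_edges_lowerI[of n "Tp (\<tau> l)" "perm_match n \<sigma>" "perm_match n \<tau>"] \<rho>(2)[of l]
        by (simp_all add: perm_match_def)
      then show ?thesis using Tp True by (simp add: perm_match_def)
    qed
    have "1 \<le> \<rho> j \<and> \<rho> j \<le> n" if "1 \<le> j" "j \<le> n" for j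
      using that \<sigma> \<tau> \<rho>(1)[of j] unfolding involution_on_def by auto
    then have target: "inr n (perm_match n \<rho> p) \<and> perm_match n \<rho> p \<noteq> p"
      using True by (cases p) (auto simp: perm_match_def)
    have unique: "q = perm_match n \<rho> p" if "inr n q \<and> q \<noteq> p \<and> (embOut p, embOut q) \<in> ?E\<^sup>*" for q
    proof -
      have "bottom_index \<sigma> \<tau> (embOut p) = bottom_index \<sigma> \<tau> (embOut q)"
        using stack_path_bottom_index[OF \<sigma> \<tau>] that by blast
      moreover have "\<sigma> (\<sigma> j) = j" "\<tau> (\<tau> j) = j" for j
        using \<sigma> \<tau> unfolding involution_on_def by auto
      ultimately show ?thesis using that True \<rho>[symmetric]
        by (cases p; cases q) (auto simp: perm_match_def, metis)
    qed
    have "(THE q. inr n q \<and> q \<noteq> p \<and> (embOut p, embOut q) \<in> ?E\<^sup>*) = perm_match n \<rho> p"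
      using target path unique by (intro the_equality) auto
    then show ?thesis using True by (simp add: comp_match_def)
  qed
qed

lemma nloops_perm_match:
  assumes \<sigma>: "involution_on n \<sigma>"
  shows "nloops n (perm_match n \<tau>) (perm_match n \<sigma>) = 0"
proof -
  let ?E = "stack_edges n (perm_match n \<tau>) (perm_match n \<sigma>)"
  have "(L1 i, embOut (Bt (\<sigma> i))) \<in> ?E\<^sup>*" "inr n (Bt (\<sigma> i))" if "1 \<le> i" "i \<le> n" for i
    using that \<sigma> stack_edges_lowerI[of n "Tp i" "perm_match n \<sigma>" "perm_match n \<tau>"]
    unfolding involution_on_def by (auto simp: perm_match_def)
  then have "{L1 i | i. 1 \<le> i \<and> i \<le> n \<and> \<not> (\<exists>p. inr n p \<and> (L1 i, embOut p) \<in> ?E\<^sup>*)} = {}"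
    by blast
  then show ?thesis unfolding nloops_def Let_def by simp
qed

lemma involution_on_id: "involution_on n id"
  by (simp add: involution_on_def)

lemma involution_on_transpose: "k \<in> {1..<n} \<Longrightarrow> involution_on n (transpose k (k + 1))"
  by (auto simp: involution_on_def transpose_def)

lemma idm_eq_perm_match: "idm n = perm_match n id"
  by (rule ext, case_tac x) (auto simp: idm_def perm_match_def)

lemma crossm_eq_perm_match: "k \<in> {1..<n} \<Longrightarrow> crossm n k = perm_match n (transpose k (k + 1))"
  by (rule ext, case_tac x) (auto simp: crossm_def idm_def perm_match_def transpose_def)

lemma perm_diag_in_Br:
  assumes "a \<in> Seq r t" "b \<in> Seq r t" and \<sigma>: "involution_on (r + t) \<sigma>"
    and labels: "\<And>i. 1 \<le> i \<Longrightarrow> i \<le> r + t \<Longrightarrow> ent a i = ent b (\<sigma> i)"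
  shows "(a, b, perm_match (r + t) \<sigma>) \<in> Br r t"
proof -
  have "inr (r + t) (perm_match (r + t) \<sigma> p) \<and> perm_match (r + t) \<sigma> p \<noteq> p \<and>
      perm_match (r + t) \<sigma> (perm_match (r + t) \<sigma> p) = p \<and>
      (if same_row p (perm_match (r + t) \<sigma> p) then lbl a b p \<noteq> lbl a b (perm_match (r + t) \<sigma> p)
       else lbl a b p = lbl a b (perm_match (r + t) \<sigma> p))" if p: "inr (r + t) p" for p
  proof (cases p)
    case (Bt i)
    then show ?thesis using p \<sigma> labels[of i] unfolding involution_on_def by (auto simp: perm_match_def)
  next
    case (Tp j)
    then have "1 \<le> \<sigma> j" "\<sigma> j \<le> r + t" "\<sigma> (\<sigma> j) = j" using p \<sigma> unfolding involution_on_def by auto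
    then show ?thesis using p \<sigma> labels[of "\<sigma> j"] Tp unfolding involution_on_def
      by (auto simp: perm_match_def)
  qed
  moreover have "perm_match (r + t) \<sigma> p = p" if "\<not> inr (r + t) p" for p
    using that by (simp add: perm_match_def)
  ultimately show ?thesis using assms(1,2) unfolding Br_def by blast
qed

lemma length_swp [simp]: "length (swp k a) = length a"
  by (simp add: swp_def)

lemma ent_swp:
  assumes "1 \<le> k" "k < length a" "1 \<le> j" "j \<le> length a"
  shows "ent (swp k a) j = ent a (transpose k (k + 1) j)"
  using assms by (auto simp: ent_def swp_def transpose_def nth_list_update)

lemma ent_swp_transpose:
  assumes "1 \<le> k" "k < length a" "1 \<le> j" "j \<le> length a"
  shows "ent (swp k a) (transpose k (k + 1) j) = ent a j"
  using assms ent_swp[of k a "transpose k (k + 1) j"] by (auto simp: transpose_def)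

lemma swp_swp:
  assumes "1 \<le> k" "k < length a"
  shows "swp k (swp k a) = a"
proof (rule nth_equalityI)
  fix j assume "j < length (swp k (swp k a))"
  then show "swp k (swp k a) ! j = a ! j"
    using assms by (cases "j = k - 1 \<or> j = k") (auto simp: swp_def nth_list_update)
qed simp

lemma swp_in_Seq:
  assumes a: "a \<in> Seq r t" and k: "1 \<le> k" "k < r + t"
  shows "swp k a \<in> Seq r t"
proof -
  have "mset (swp k a) = mset a"
    unfolding swp_def using mset_swap[of k a "k - 1"] k a by (simp add: Seq_def)
  then have "length (filter id (swp k a)) = length (filter id a)"
    by (metis mset_filter size_mset)
  then show ?thesis using a by (simp add: Seq_def)
qed

lemma finite_Seq: "finite (Seq r t)"
proof (rule finite_subset)
  show "Seq r t \<subseteq> {xs. set xs \<subseteq> UNIV \<and> length xs = r + t}" by (auto simp: Seq_def)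
qed (rule finite_lists_length_eq, simp)

lemma swpv_apply: "swpv k i j = i (transpose k (k + 1) j)"
  by (simp add: swpv_def transpose_def)

lemma transpose_in_range: "k \<in> {1..<n::nat} \<Longrightarrow> j \<in> {1..n} \<Longrightarrow> transpose k (k + 1) j \<in> {1..n}"
  by (auto simp: transpose_def)

section \<open>Commuting nilpotent operators\<close>

lemma funpow_intertwine:
  assumes intertwine: "\<And>u. u \<in> R \<Longrightarrow> f (\<phi> u) = \<phi> (g u)"
    and invariant: "\<And>u. u \<in> R \<Longrightarrow> g u \<in> R" and "u \<in> R"
  shows "(f ^^ n) (\<phi> u) = \<phi> ((g ^^ n) u)"
proof -
  have "(f ^^ n) (\<phi> u) = \<phi> ((g ^^ n) u) \<and> (g ^^ n) u \<in> R"
    by (induction n) (use assms in auto)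
  then show ?thesis ..
qed

lemma additive_funpow: "additive (f :: 'a::ab_group_add \<Rightarrow> 'a) \<Longrightarrow> additive (f ^^ n)"
  by (induction n) (auto simp: additive_def)

lemma funpow_apply_commute:
  assumes "\<And>x. f (g x) = g (f x)"
  shows "(f ^^ n) (g x) = g ((f ^^ n) x)"
  using funpow_intertwine[of UNIV f g f x n] assms by blast

lemma nilpotent_add_commuting:
  assumes A: "additive A" and B: "additive B" and AB: "\<And>x. A (B x) = B (A x)"
  shows "(A ^^ p) w = 0 \<Longrightarrow> (B ^^ q) w = 0 \<Longrightarrow> ((\<lambda>x. A x + B x) ^^ (p + q)) w = 0"
proof (induction "p + q" arbitrary: p q w)
  case (Suc m)
  let ?C = "\<lambda>x. A x + B x"
  have C: "additive ?C" using A B by (simp add: additive_def algebra_simps)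
  show ?case
  proof (cases "p = 0 \<or> q = 0")
    case True
    then have "w = 0" using Suc.prems by auto
    then show ?thesis using additive.zero[OF additive_funpow[OF C]] by simp
  next
    case False
    then obtain p' q' where pq: "p = Suc p'" "q = Suc q'" by (metis not0_implies_Suc)
    have CA: "(?C ^^ m) (A w) = 0"
    proof -
      have "(A ^^ p') (A w) = 0"
        using Suc.prems(1) pq by (simp add: funpow_Suc_right del: funpow.simps)
      moreover have "(B ^^ q) (A w) = A ((B ^^ q) w)"
        by (rule funpow_apply_commute) (rule AB[symmetric])
      moreover have "m = p' + q" using Suc.hyps(2) pq by simp
      ultimately show ?thesis using Suc.hyps(1)[of p' q "A w"] Suc.prems(2) additive.zero[OF A] by metis
    qed
    have CB: "(?C ^^ m) (B w) = 0"
    proof -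
      have "(B ^^ q') (B w) = 0"
        using Suc.prems(2) pq by (simp add: funpow_Suc_right del: funpow.simps)
      moreover have "(A ^^ p) (B w) = B ((A ^^ p) w)"
        by (rule funpow_apply_commute) (rule AB)
      moreover have "m = p + q'" using Suc.hyps(2) pq by simp
      ultimately show ?thesis using Suc.hyps(1)[of p q' "B w"] Suc.prems(1) additive.zero[OF B] by metis
    qed
    have "(?C ^^ (p + q)) w = (?C ^^ m) (A w + B w)"
      using Suc.hyps(2) by (metis funpow_Suc_right o_apply)
    then show ?thesis using CA CB additive.add[OF additive_funpow[OF C]] by simp
  qed
qed simp

lemma funpow_uminus:
  assumes "additive (f :: 'a::ab_group_add \<Rightarrow> 'a)"
  shows "((\<lambda>x. - f x) ^^ n) w = (if even n then (f ^^ n) w else - (f ^^ n) w)"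
  by (induction n) (simp_all add: additive.minus[OF assms])

context vector_space
begin

lemma nilpotent_eigenvector_eq_0:
  assumes hom: "\<And>c x. C (scale c x) = scale c (C x)"
    and "(C ^^ n) z = 0" and eigen: "C z = scale \<alpha> z" and "\<alpha> \<noteq> 0"
  shows "z = 0"
proof -
  have "(C ^^ n) z = scale (\<alpha> ^ n) z"
    by (induction n) (simp_all add: hom eigen mult.commute)
  then show ?thesis using assms(2,4) by simp
qed

lemma commuting_nilpotent_add_eigenvector_eq_0:
  assumes A: "Vector_Spaces.linear scale scale A" and B: "Vector_Spaces.linear scale scale B"
    and AB: "\<And>x. A (B x) = B (A x)" and "(A ^^ p) z = 0" "(B ^^ q) z = 0"
    and eigen: "A z + B z = scale \<alpha> z" and "\<alpha> \<noteq> 0"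
  shows "z = 0"
proof (rule nilpotent_eigenvector_eq_0)
  have "additive A" "additive B" using A B by (simp_all add: Vector_Spaces.linear_iff additive_def)
  then show "((\<lambda>x. A x + B x) ^^ (p + q)) z = 0"
    using nilpotent_add_commuting AB assms(4,5) by blast
qed (use A B eigen assms(7) in \<open>simp_all add: Vector_Spaces.linear_iff scale_right_distrib\<close>)

lemma commuting_nilpotent_diff_eigenvector_eq_0:
  assumes A: "Vector_Spaces.linear scale scale A" and B: "Vector_Spaces.linear scale scale B"
    and AB: "\<And>x. A (B x) = B (A x)" and "(A ^^ p) z = 0" "(B ^^ q) z = 0"
    and eigen: "A z - B z = scale \<alpha> z" and "\<alpha> \<noteq> 0"
  shows "z = 0"
proof (rule commuting_nilpotent_add_eigenvector_eq_0[where A = A and B = "\<lambda>x. - B x" and p = p and q = q and \<alpha> = \<alpha>])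
  show "Vector_Spaces.linear scale scale (\<lambda>x. - B x)"
    using B by (simp add: Vector_Spaces.linear_iff scale_minus_right)
  have "additive A" using A by (simp add: Vector_Spaces.linear_iff additive_def)
  then show "A (- B x) = - B (A x)" for x
    by (simp add: additive.minus AB)
  show "((\<lambda>x. - B x) ^^ q) z = 0"
    using B assms(5) by (simp add: funpow_uminus Vector_Spaces.linear_iff additive_def)
qed (use A eigen assms(4,7) in simp_all)


lemma commuting_nilpotent_square_one_eq_0:
  assumes A: "Vector_Spaces.linear scale scale A" and B: "Vector_Spaces.linear scale scale B"
    and AB: "\<And>x. A (B x) = B (A x)" and nilA: "(A ^^ p) w = 0" and nilB: "(B ^^ q) w = 0"
    and D: "D = (\<lambda>x. A x - B x + scale \<gamma> x)" and square: "D (D w) = w"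
    and "\<gamma> \<noteq> 1" "\<gamma> \<noteq> - 1"
  shows "w = 0"
proof -
  have linear_D: "Vector_Spaces.linear scale scale D"
    using A B unfolding D by (simp add: Vector_Spaces.linear_iff algebra_simps scale_left_commute)
  have additive: "additive A" "additive B" "additive D"
    using A B linear_D by (simp_all add: Vector_Spaces.linear_iff additive_def)
  have "A (D x) = D (A x)" "B (D x) = D (B x)" for x
    using A B AB additive.diff[OF additive(1)] additive.diff[OF additive(2)]
    unfolding D by (simp_all add: Vector_Spaces.linear_iff)
  then have "(A ^^ p) (D w) = 0" "(B ^^ q) (D w) = 0"
    using funpow_apply_commute[of A D p w] funpow_apply_commute[of B D q w] nilA nilB
      additive.zero[OF additive(3)] by simp_all
  text \<open>\<open>z = w + D w\<close> satisfies \<open>D z = z\<close>, so \<open>z = 0\<close> as \<open>\<gamma> \<noteq> 1\<close>; then \<open>D w = - w\<close>, so \<open>w = 0\<close>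
    as \<open>\<gamma> \<noteq> - 1\<close>.\<close>
  define z where "z = w + D w"
  have "D z = z" unfolding z_def using square additive.add[OF additive(3)] by (simp add: add.commute)
  have "(A ^^ p) z = 0" "(B ^^ q) z = 0"
    unfolding z_def using nilA nilB \<open>(A ^^ p) (D w) = 0\<close> \<open>(B ^^ q) (D w) = 0\<close>
      additive.add[OF additive_funpow[OF additive(1)]] additive.add[OF additive_funpow[OF additive(2)]]
    by simp_all
  moreover have "A z - B z = scale (1 - \<gamma>) z"
    using \<open>D z = z\<close> unfolding D by (simp add: scale_left_diff_distrib algebra_simps)
  moreover have "1 - \<gamma> \<noteq> 0" using \<open>\<gamma> \<noteq> 1\<close> by simp
  ultimately have "z = 0" by (rule commuting_nilpotent_diff_eigenvector_eq_0[OF A B AB])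
  then have "A w - B w = scale (- 1 - \<gamma>) w"
    using fun_cong[OF D, of w] unfolding z_def
    by (simp add: scale_left_diff_distrib algebra_simps eq_neg_iff_add_eq_0 add.commute)
  moreover have "- 1 - \<gamma> \<noteq> 0" using \<open>\<gamma> \<noteq> - 1\<close> by (simp add: diff_eq_eq)
  ultimately show "w = 0" by (rule commuting_nilpotent_diff_eigenvector_eq_0[OF A B AB nilA nilB])
qed

end

section \<open>Modules over \<open>VBr\<close>\<close>

locale VBr_rep =
  fixes r t :: nat and \<omega> :: "nat \<Rightarrow> complex" and scl :: "complex \<Rightarrow> 'v::ab_group_add \<Rightarrow> 'v"
    and act :: "diag \<Rightarrow> 'v \<Rightarrow> 'v" and Y :: "nat \<Rightarrow> 'v \<Rightarrow> 'v"
  assumes VBr_module: "VBr_module r t \<omega> scl act Y"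
begin

abbreviation S where "S \<equiv> opS r t act"
abbreviation Shat where "Shat \<equiv> opShat r t act"
abbreviation E where "E \<equiv> opE r t act"
abbreviation Ehat where "Ehat \<equiv> opEhat r t act"

lemmas relations = VBr_module[unfolded VBr_module_def Let_def]

sublocale vector_space scl
  using relations by blast

sublocale vector_space_pair scl scl ..

lemma linear_act [rule_format]: "\<forall>d\<in>Br r t. Vector_Spaces.linear scl scl (act d)"
  using relations by (elim conjE) assumption

lemma linear_Y [rule_format]: "\<forall>j\<in>{1..r + t}. Vector_Spaces.linear scl scl (Y j)"
  using relations by (elim conjE) assumption

lemma act_act [rule_format]: "\<forall>d1\<in>Br r t. \<forall>d2\<in>Br r t. \<forall>v. act d1 (act d2 v) =
    (if dtgt d2 = dsrc d1 then scl (\<omega> 0 ^ dloops d1 d2) (act (dcomp d1 d2) v) else 0)"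
  using relations by (elim conjE) assumption

lemma Y_commute [rule_format]:
  "\<forall>i\<in>{1..r + t}. \<forall>j\<in>{1..r + t}. \<forall>v. Y i (Y j v) = Y j (Y i v)"
  using relations by (elim conjE) assumption

lemma Y_act_one [rule_format]:
  "\<forall>i\<in>{1..r + t}. \<forall>a\<in>Seq r t. \<forall>v. Y i (act (d_one a) v) = act (d_one a) (Y i v)"
  using relations by (elim conjE) assumption

lemma Y_commute_generators [rule_format]:
  "\<forall>i\<in>{1..r + t}. \<forall>k\<in>{1..<r + t}. i \<notin> {k, k + 1} \<longrightarrow> (\<forall>v.
     Y i (S k v) = S k (Y i v) \<and> Y i (Shat k v) = Shat k (Y i v) \<and>
     Y i (E k v) = E k (Y i v) \<and> Y i (Ehat k v) = Ehat k (Y i v))"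
  using relations by (elim conjE) assumption

lemma S_Y [rule_format]: "\<forall>k\<in>{1..<r + t}. \<forall>a\<in>Seq r t. ent a k = ent a (k + 1) \<longrightarrow> (\<forall>v.
    S k (Y k (act (d_one a) v)) - Y (k + 1) (S k (act (d_one a) v)) = - act (d_one a) v \<and>
    S k (Y (k + 1) (act (d_one a) v)) - Y k (S k (act (d_one a) v)) = act (d_one a) v)"
  using relations by (elim conjE) assumption

lemma Shat_Y [rule_format]: "\<forall>k\<in>{1..<r + t}. \<forall>v.
    Shat k (Y k v) - Y (k + 1) (Shat k v) = Ehat k v \<and>
    Shat k (Y (k + 1) v) - Y k (Shat k v) = - Ehat k v"
  using relations by (elim conjE) assumption

lemma E_Ehat_Y_add [rule_format]: "\<forall>k\<in>{1..<r + t}. \<forall>v.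
    E k (Y k v + Y (k + 1) v) = 0 \<and> Y k (E k v) + Y (k + 1) (E k v) = 0 \<and>
    Ehat k (Y k v + Y (k + 1) v) = 0 \<and> Y k (Ehat k v) + Y (k + 1) (Ehat k v) = 0"
  using relations by (elim conjE) assumption

lemma length_Seq: "a \<in> Seq r t \<Longrightarrow> length a = r + t"
  by (simp add: Seq_def)

lemma d_one_eq: "a \<in> Seq r t \<Longrightarrow> d_one a = (a, a, perm_match (r + t) id)"
  by (simp add: d_one_def length_Seq idm_eq_perm_match)

lemma d_s_eq: "a \<in> Seq r t \<Longrightarrow> k \<in> {1..<r + t} \<Longrightarrow>
    d_s k a = (a, a, perm_match (r + t) (transpose k (k + 1)))"
  by (simp add: d_s_def length_Seq crossm_eq_perm_match)

lemma d_shat_eq: "a \<in> Seq r t \<Longrightarrow> k \<in> {1..<r + t} \<Longrightarrow>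
    d_shat k a = (a, swp k a, perm_match (r + t) (transpose k (k + 1)))"
  by (simp add: d_shat_def length_Seq crossm_eq_perm_match)

lemma d_one_in_Br: "a \<in> Seq r t \<Longrightarrow> d_one a \<in> Br r t"
  by (simp add: d_one_eq perm_diag_in_Br involution_on_id)

lemma d_s_in_Br:
  assumes a: "a \<in> Seq r t" and k: "k \<in> {1..<r + t}" and "ent a k = ent a (k + 1)"
  shows "d_s k a \<in> Br r t"
  unfolding d_s_eq[OF a k]
  by (rule perm_diag_in_Br[OF a a involution_on_transpose[OF k]]) (use assms in \<open>auto simp: transpose_def\<close>)

lemma d_shat_in_Br:
  assumes a: "a \<in> Seq r t" and k: "k \<in> {1..<r + t}"
  shows "d_shat k a \<in> Br r t"
  unfolding d_shat_eq[OF a k]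
proof (rule perm_diag_in_Br[OF a _ involution_on_transpose[OF k]])
  show "swp k a \<in> Seq r t" using swp_in_Seq a k by simp
  show "ent a j = ent (swp k a) (transpose k (k + 1) j)" if "1 \<le> j" "j \<le> r + t" for j
    using ent_swp_transpose[of k a j] that k length_Seq[OF a] by simp
qed

lemma act_perm_diag_mult:
  assumes "(b, c, perm_match (r + t) \<tau>) \<in> Br r t" "(a, b, perm_match (r + t) \<sigma>) \<in> Br r t"
    and "involution_on (r + t) \<sigma>" "involution_on (r + t) \<tau>"
    and "\<And>j. \<tau> (\<sigma> j) = \<rho> j" "\<And>j. \<sigma> (\<tau> j) = \<rho> j"
  shows "act (b, c, perm_match (r + t) \<tau>) (act (a, b, perm_match (r + t) \<sigma>) v) =
    act (a, c, perm_match (r + t) \<rho>) v"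
proof -
  have "length a = r + t" using assms(2) by (simp add: Br_def length_Seq)
  then show ?thesis
    using act_act[OF assms(1,2)] comp_match_perm_match[OF assms(3-6)] nloops_perm_match[OF assms(3)]
    by simp
qed

lemma linear_S: "k \<in> {1..<r + t} \<Longrightarrow> Vector_Spaces.linear scl scl (S k)"
  unfolding opS_def[abs_def] by (rule linear_compose_sum, rule ballI, rule linear_act, rule d_s_in_Br) auto

lemma linear_Shat: "k \<in> {1..<r + t} \<Longrightarrow> Vector_Spaces.linear scl scl (Shat k)"
  unfolding opShat_def[abs_def] by (rule linear_compose_sum, rule ballI, rule linear_act, rule d_shat_in_Br) auto

context
  fixes a k assumes a: "a \<in> Seq r t" and k: "k \<in> {1..<r + t}"
begin

private lemma involutions: "involution_on (r + t) id" "involution_on (r + t) (transpose k (k + 1))"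
  using involution_on_id involution_on_transpose[OF k] by blast+

lemma S_act_one:
  assumes e: "ent a k = ent a (k + 1)"
  shows "S k (act (d_one a) w) = act (d_s k a) w"
proof -
  let ?B = "{b \<in> Seq r t. ent b k = ent b (k + 1)}"
  have fin: "finite ?B" and aB: "a \<in> ?B" using finite_Seq a e by simp_all
  moreover have "act (d_s k b) (act (d_one a) w) = 0" if "b \<in> ?B - {a}" for b
    using act_act[OF d_s_in_Br d_one_in_Br[OF a], of b k w] that k
    by (auto simp: d_one_def d_s_def)
  ultimately have "S k (act (d_one a) w) = act (d_s k a) (act (d_one a) w)"
    unfolding opS_def sum.remove[OF fin aB] by simp
  also have "\<dots> = act (d_s k a) w"
    using act_perm_diag_mult[of a a "transpose k (k + 1)" a id] d_s_in_Br[OF a k e] d_one_in_Br[OF a]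
      involutions by (simp add: d_s_eq[OF a k] d_one_eq[OF a])
  finally show ?thesis .
qed

lemma act_one_d_s:
  assumes e: "ent a k = ent a (k + 1)"
  shows "act (d_one a) (act (d_s k a) w) = act (d_s k a) w"
  using act_perm_diag_mult[of a a id a "transpose k (k + 1)"] d_s_in_Br[OF a k e] d_one_in_Br[OF a]
    involutions by (simp add: d_s_eq[OF a k] d_one_eq[OF a])

lemma act_d_s_d_s:
  assumes e: "ent a k = ent a (k + 1)"
  shows "act (d_s k a) (act (d_s k a) w) = act (d_one a) w"
  using act_perm_diag_mult[of a a "transpose k (k + 1)" a "transpose k (k + 1)" id] d_s_in_Br[OF a k e]
    involutions by (simp add: d_s_eq[OF a k] d_one_eq[OF a])

lemma Shat_act_one:
  assumes e: "ent a k \<noteq> ent a (k + 1)"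
  shows "Shat k (act (d_one a) w) = act (d_shat k a) w"
proof -
  let ?B = "{b \<in> Seq r t. ent b k \<noteq> ent b (k + 1)}"
  have fin: "finite ?B" and aB: "a \<in> ?B" using finite_Seq a e by simp_all
  moreover have "act (d_shat k b) (act (d_one a) w) = 0" if "b \<in> ?B - {a}" for b
    using act_act[OF d_shat_in_Br d_one_in_Br[OF a], of b k w] that k
    by (auto simp: d_one_def d_shat_def)
  ultimately have "Shat k (act (d_one a) w) = act (d_shat k a) (act (d_one a) w)"
    unfolding opShat_def sum.remove[OF fin aB] by simp
  also have "\<dots> = act (d_shat k a) w"
    using act_perm_diag_mult[of a "swp k a" "transpose k (k + 1)" a id] d_shat_in_Br[OF a k]
      d_one_in_Br[OF a] involutions by (simp add: d_shat_eq[OF a k] d_one_eq[OF a])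
  finally show ?thesis .
qed

lemma act_one_swp_d_shat: "act (d_one (swp k a)) (act (d_shat k a) w) = act (d_shat k a) w"
proof -
  have "swp k a \<in> Seq r t" using swp_in_Seq a k by auto
  then show ?thesis
    using act_perm_diag_mult[of "swp k a" "swp k a" id a "transpose k (k + 1)"] d_shat_in_Br[OF a k]
      d_one_in_Br involutions by (simp add: d_shat_eq[OF a k] d_one_eq)
qed

lemma act_d_shat_d_shat: "act (d_shat k (swp k a)) (act (d_shat k a) w) = act (d_one a) w"
proof -
  have sa: "swp k a \<in> Seq r t" using swp_in_Seq a k by auto
  have "swp k (swp k a) = a" using swp_swp[of k a] k length_Seq[OF a] by auto
  then show ?thesis
    using act_perm_diag_mult[of "swp k a" a "transpose k (k + 1)" a "transpose k (k + 1)" id]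
      d_shat_in_Br[OF a k] d_shat_in_Br[OF sa k] involutions
    by (simp add: d_shat_eq[OF a k] d_shat_eq[OF sa k] d_one_eq[OF a])
qed

end

section \<open>Generalised eigenspaces and intertwiners\<close>

definition Yminus :: "nat \<Rightarrow> complex \<Rightarrow> 'v \<Rightarrow> 'v" where
  "Yminus j c = (\<lambda>x. Y j x - scl c x)"

lemma gen_eig_iff_Yminus: "gen_eig (r + t) scl act Y a i =
    {v. v \<in> range (act (d_one a)) \<and> (\<exists>N. \<forall>j\<in>{1..r + t}. (Yminus j (i j) ^^ N) v = 0)}"
  unfolding gen_eig_def Yminus_def ..

lemma linear_Yminus: "j \<in> {1..r + t} \<Longrightarrow> Vector_Spaces.linear scl scl (Yminus j c)"
  unfolding Yminus_def by (rule linear_compose_sub[OF linear_Y linear_scale_self])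

lemma Yminus_commute:
  assumes j: "j \<in> {1..r + t}" and l: "l \<in> {1..r + t}"
  shows "Yminus j c (Yminus l d x) = Yminus l d (Yminus j c x)"
  using Y_commute[OF j l, of x] linear_Y[OF j] linear_Y[OF l]
  by (simp add: Yminus_def linear_diff linear_scale scale_right_diff_distrib mult.commute)

lemma Yminus_act_one:
  "j \<in> {1..r + t} \<Longrightarrow> a \<in> Seq r t \<Longrightarrow> Yminus j c (act (d_one a) x) = act (d_one a) (Yminus j c x)"
  unfolding Yminus_def using Y_act_one[of j a x] linear_act[OF d_one_in_Br, of a]
  by (simp add: linear_diff linear_scale)

lemma Y_range_one:
  "j \<in> {1..r + t} \<Longrightarrow> a \<in> Seq r t \<Longrightarrow> u \<in> range (act (d_one a)) \<Longrightarrow> Y j u \<in> range (act (d_one a))"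
  using Y_act_one[of j a] by auto

lemma nilpotent_Yminus_apply:
  assumes "j \<in> {1..r + t}" "l \<in> {1..r + t}" and "(Yminus j c ^^ N) u = 0"
  shows "(Yminus j c ^^ N) (Yminus l d u) = 0"
  using funpow_apply_commute[of "Yminus j c" "Yminus l d" N u] Yminus_commute[OF assms(1,2)]
    assms(3) linear_0[OF linear_Yminus[OF assms(2)]] by simp

lemma Yminus_intertwine:
  assumes "Vector_Spaces.linear scl scl \<phi>" and "Y j (\<phi> u) = \<phi> (Y l u)"
  shows "Yminus j c (\<phi> u) = \<phi> (Yminus l c u)"
  using assms by (simp add: Yminus_def linear_diff linear_scale)

text \<open>The invariant subspace \<open>R\<close> is needed because the relations for \<open>s_k\<close> only hold on \<open>1_a M\<close>.\<close>

lemma intertwiner_Yminus_succ_eq_0: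
  assumes k: "k \<in> {1..<r + t}" and \<phi>: "Vector_Spaces.linear scl scl \<phi>" and R: "subspace R"
    and Y_R: "\<And>j u. j \<in> {1..r + t} \<Longrightarrow> u \<in> R \<Longrightarrow> Y j u \<in> R"
    and \<phi>_Y: "\<And>j u. j \<in> {1..r + t} \<Longrightarrow> u \<in> R \<Longrightarrow> Y j (\<phi> u) = \<phi> (Y (transpose k (k + 1) j) u)"
    and hyp: "\<forall>u\<in>gen_eig (r + t) scl act Y b (swpv k i). Y k u - scl (i (k + 1)) u = 0"
    and v: "v \<in> gen_eig (r + t) scl act Y a i" "v \<in> R" and \<phi>_v: "\<phi> v \<in> range (act (d_one b))"
  shows "\<phi> (Yminus (k + 1) (i (k + 1)) v) = 0"
proof -
  obtain N where nil: "\<forall>j\<in>{1..r + t}. (Yminus j (i j) ^^ N) v = 0"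
    using v(1) unfolding gen_eig_iff_Yminus by blast
  have "(Yminus j (swpv k i j) ^^ N) (\<phi> v) = 0" if j: "j \<in> {1..r + t}" for j
  proof -
    let ?j' = "transpose k (k + 1) j"
    have j': "?j' \<in> {1..r + t}" using transpose_in_range[OF k j] .
    have "(Yminus j (swpv k i j) ^^ N) (\<phi> v) = \<phi> ((Yminus ?j' (i ?j') ^^ N) v)"
    proof (rule funpow_intertwine[where R = R])
      show "Yminus j (swpv k i j) (\<phi> u) = \<phi> (Yminus ?j' (i ?j') u)" if "u \<in> R" for u
        using Yminus_intertwine[OF \<phi> \<phi>_Y[OF j that]] by (simp add: swpv_apply)
      show "Yminus ?j' (i ?j') u \<in> R" if "u \<in> R" for u
        unfolding Yminus_def using Y_R[OF j' that] that R by (simp add: subspace_diff subspace_scale)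
    qed (rule v(2))
    then show ?thesis using nil j' linear_0[OF \<phi>] by simp
  qed
  then have "\<phi> v \<in> gen_eig (r + t) scl act Y b (swpv k i)"
    using \<phi>_v unfolding gen_eig_iff_Yminus by blast
  then have "Yminus k (i (k + 1)) (\<phi> v) = 0" using hyp by (simp add: Yminus_def)
  moreover have "k \<in> {1..r + t}" using k by simp
  ultimately show ?thesis
    using Yminus_intertwine[OF \<phi> \<phi>_Y[OF _ v(2)]] by (simp add: swpv_apply)
qed

lemma gen_eig_Yminus_succ_nilpotent:
  assumes "v \<in> gen_eig (r + t) scl act Y a i" and k: "k \<in> {1..<r + t}"
  obtains N where "(Yminus k (i k) ^^ N) (Yminus (k + 1) (i (k + 1)) v) = 0"
    and "(Yminus (k + 1) (i (k + 1)) ^^ N) (Yminus (k + 1) (i (k + 1)) v) = 0"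
proof -
  obtain N where "\<forall>j\<in>{1..r + t}. (Yminus j (i j) ^^ N) v = 0"
    using assms(1) unfolding gen_eig_iff_Yminus by blast
  moreover have "k \<in> {1..r + t}" "k + 1 \<in> {1..r + t}" using k by auto
  ultimately show ?thesis using that nilpotent_Yminus_apply by blast
qed

definition Ysum :: "nat \<Rightarrow> 'v \<Rightarrow> 'v" where
  "Ysum k = (\<lambda>x. Y k x + Y (k + 1) x)"

definition Ydiff :: "nat \<Rightarrow> 'v \<Rightarrow> 'v" where
  "Ydiff k = (\<lambda>x. Y k x - Y (k + 1) x)"

definition Phi :: "nat \<Rightarrow> 'v \<Rightarrow> 'v" where
  "Phi k = (\<lambda>x. S k (Ydiff k x) + x)"

definition Phi_hat :: "nat \<Rightarrow> 'v \<Rightarrow> 'v" where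
  "Phi_hat k = (\<lambda>x. Shat k (Ysum k x))"

context
  fixes k assumes k: "k \<in> {1..<r + t}"
begin

private lemma k_range: "k \<in> {1..r + t}" "k + 1 \<in> {1..r + t}"
  using k by auto

lemma linear_Ysum: "Vector_Spaces.linear scl scl (Ysum k)"
  unfolding Ysum_def using linear_compose_add linear_Y k_range by blast

lemma linear_Ydiff: "Vector_Spaces.linear scl scl (Ydiff k)"
  unfolding Ydiff_def using linear_compose_sub linear_Y k_range by blast

lemma linear_Phi: "Vector_Spaces.linear scl scl (Phi k)"
  unfolding Phi_def using Vector_Spaces.linear_compose[OF linear_Ydiff linear_S[OF k]] linear_ident
  by (intro linear_compose_add) (simp_all add: o_def)

lemma linear_Phi_hat: "Vector_Spaces.linear scl scl (Phi_hat k)"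
  unfolding Phi_hat_def using Vector_Spaces.linear_compose[OF linear_Ysum linear_Shat[OF k]]
  by (simp add: o_def)

lemma Ysum_Y_commute: "j \<in> {1..r + t} \<Longrightarrow> Ysum k (Y j x) = Y j (Ysum k x)"
  unfolding Ysum_def using linear_add[OF linear_Y] Y_commute k_range by simp

lemma Ydiff_Y_commute: "j \<in> {1..r + t} \<Longrightarrow> Ydiff k (Y j x) = Y j (Ydiff k x)"
  unfolding Ydiff_def using linear_diff[OF linear_Y] Y_commute k_range by simp

lemma Y_Phi_hat: "j \<in> {1..r + t} \<Longrightarrow> Y j (Phi_hat k x) = Phi_hat k (Y (transpose k (k + 1) j) x)"
proof -
  assume j: "j \<in> {1..r + t}"
  have Ehat_Ysum: "Ehat k (Ysum k x) = 0" unfolding Ysum_def using E_Ehat_Y_add[OF k] by blast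
  consider "j = k" | "j = k + 1" | "j \<noteq> k \<and> j \<noteq> k + 1" by blast
  then show ?thesis
  proof cases
    case 1
    then show ?thesis using Shat_Y[OF k, of "Ysum k x"] Ehat_Ysum Ysum_Y_commute[OF k_range(2)]
      by (simp add: Phi_hat_def algebra_simps)
  next
    case 2
    then show ?thesis using Shat_Y[OF k, of "Ysum k x"] Ehat_Ysum Ysum_Y_commute[OF k_range(1)]
      by (simp add: Phi_hat_def algebra_simps)
  next
    case 3
    then show ?thesis using Y_commute_generators[OF j k] Ysum_Y_commute[OF j] by (simp add: Phi_hat_def)
  qed
qed

context
  fixes a assumes a: "a \<in> Seq r t"
begin

lemma Ysum_act_one: "Ysum k (act (d_one a) x) = act (d_one a) (Ysum k x)"
  unfolding Ysum_def using Y_act_one[OF k_range(1) a] Y_act_one[OF k_range(2) a]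
    linear_add[OF linear_act[OF d_one_in_Br[OF a]]]
  by simp

lemma Ydiff_act_one: "Ydiff k (act (d_one a) x) = act (d_one a) (Ydiff k x)"
  unfolding Ydiff_def using Y_act_one[OF k_range(1) a] Y_act_one[OF k_range(2) a]
    linear_diff[OF linear_act[OF d_one_in_Br[OF a]]]
  by simp

lemma Phi_hat_act_one:
  assumes "ent a k \<noteq> ent a (k + 1)"
  shows "Phi_hat k (act (d_one a) x) = act (d_one (swp k a)) (act (d_shat k a) (Ysum k x))"
  unfolding Phi_hat_def Ysum_act_one Shat_act_one[OF a k assms] act_one_swp_d_shat[OF a k] ..

text \<open>On \<open>1_a M\<close> the map \<open>\<hat>s_k\<close> is inverted by \<open>\<hat>s_k\<close> acting on \<open>1_(s_k a) M\<close>.\<close>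

lemma Ysum_eq_0_if_Phi_hat_eq_0:
  assumes e: "ent a k \<noteq> ent a (k + 1)" and "Phi_hat k (act (d_one a) x) = 0"
  shows "Ysum k (act (d_one a) x) = 0"
proof -
  have "act (d_shat k a) (Ysum k x) = 0"
    using assms(2) unfolding Phi_hat_def Ysum_act_one Shat_act_one[OF a k e] .
  moreover have "Vector_Spaces.linear scl scl (act (d_shat k (swp k a)))"
    using linear_act d_shat_in_Br swp_in_Seq a k by simp
  ultimately have "act (d_shat k (swp k a)) (act (d_shat k a) (Ysum k x)) = 0"
    using linear_0 by simp
  then show ?thesis unfolding Ysum_act_one act_d_shat_d_shat[OF a k] .
qed

context
  assumes e: "ent a k = ent a (k + 1)"
begin

lemma S_act_one_eq_act_one: "S k (act (d_one a) y) = act (d_one a) (act (d_s k a) y)"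
  using S_act_one[OF a k e] act_one_d_s[OF a k e] by simp

lemma S_S_act_one: "S k (S k (act (d_one a) y)) = act (d_one a) y"
proof -
  have "S k (S k (act (d_one a) y)) = S k (act (d_one a) (act (d_s k a) y))"
    unfolding S_act_one_eq_act_one ..
  also have "\<dots> = act (d_s k a) (act (d_s k a) y)" using S_act_one[OF a k e] by simp
  finally show ?thesis unfolding act_d_s_d_s[OF a k e] .
qed

lemma S_Y_range_one:
  assumes "u \<in> range (act (d_one a))"
  shows "S k (Y k u) = Y (k + 1) (S k u) - u" and "S k (Y (k + 1) u) = Y k (S k u) + u"
  using assms S_Y[OF k a e] by (auto simp: algebra_simps)

lemma Y_Phi:
  assumes j: "j \<in> {1..r + t}" and u: "u \<in> range (act (d_one a))"
  shows "Y j (Phi k u) = Phi k (Y (transpose k (k + 1) j) u)"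
proof -
  note k1 = k_range and R = Y_range_one[OF _ a u]
  have c: "Y k (Y (k + 1) u) = Y (k + 1) (Y k u)" using Y_commute[OF k1] .
  consider "j = k" | "j = k + 1" | "j \<noteq> k \<and> j \<noteq> k + 1" by blast
  then show ?thesis
  proof cases
    case 1
    have "Y k (Phi k u) = Y k (S k (Y k u)) - Y k (S k (Y (k + 1) u)) + Y k u"
      unfolding Phi_def Ydiff_def
      by (simp add: linear_add[OF linear_Y[OF k1(1)]] linear_diff[OF linear_Y[OF k1(1)]]
          linear_diff[OF linear_S[OF k]])
    also have "\<dots> = (S k (Y (k + 1) (Y k u)) - Y k u) - (S k (Y (k + 1) (Y (k + 1) u)) - Y (k + 1) u) + Y k u"
      using S_Y_range_one(2)[OF R[OF k1(1)]] S_Y_range_one(2)[OF R[OF k1(2)]] by (simp add: algebra_simps)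
    also have "\<dots> = Phi k (Y (k + 1) u)"
      unfolding Phi_def Ydiff_def using c by (simp add: linear_diff[OF linear_S[OF k]] algebra_simps)
    finally show ?thesis using 1 by simp
  next
    case 2
    have "Y (k + 1) (Phi k u) = Y (k + 1) (S k (Y k u)) - Y (k + 1) (S k (Y (k + 1) u)) + Y (k + 1) u"
      unfolding Phi_def Ydiff_def
      by (simp only: linear_add[OF linear_Y[OF k1(2)]] linear_diff[OF linear_Y[OF k1(2)]]
          linear_diff[OF linear_S[OF k]])
    also have "\<dots> = (S k (Y k (Y k u)) + Y k u) - (S k (Y k (Y (k + 1) u)) + Y (k + 1) u) + Y (k + 1) u"
      using S_Y_range_one(1)[OF R[OF k1(1)]] S_Y_range_one(1)[OF R[OF k1(2)]] by (simp add: algebra_simps)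
    also have "\<dots> = Phi k (Y k u)"
      unfolding Phi_def Ydiff_def using c by (simp add: linear_diff[OF linear_S[OF k]] algebra_simps)
    finally show ?thesis using 2 by simp
  next
    case 3
    then show ?thesis
      using Y_commute_generators[OF j k] Ydiff_Y_commute[OF j] linear_add[OF linear_Y[OF j]]
      by (simp add: Phi_def)
  qed
qed

lemma Phi_range_one: "Phi k (act (d_one a) y) \<in> range (act (d_one a))"
  unfolding Phi_def Ydiff_act_one S_act_one_eq_act_one
  by (simp only: linear_add[OF linear_act[OF d_one_in_Br[OF a]], symmetric]) (rule rangeI)

text \<open>\<open>Phi k u = 0\<close> says \<open>s_k D u = - u\<close> for \<open>D = y_k - y_(k+1)\<close>; together with \<open>s_k^2 = 1\<close> and
  \<open>D s_k = - s_k D - 2\<close> on \<open>1_a M\<close> this gives \<open>D^2 u = u\<close>.\<close>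

lemma Ydiff_square_if_Phi_eq_0:
  assumes u: "u \<in> range (act (d_one a))" and "Phi k u = 0"
  shows "Ydiff k (Ydiff k u) = u"
proof -
  have SDu: "S k (Ydiff k u) = - u" using assms(2) unfolding Phi_def by (simp add: eq_neg_iff_add_eq_0)
  have "Ydiff k u \<in> range (act (d_one a))"
    unfolding Ydiff_def using Y_range_one[OF _ a u] k_range
      linear_subspace_image[OF linear_act[OF d_one_in_Br[OF a]] subspace_UNIV]
    by (simp add: subspace_diff)
  then have "Ydiff k u = S k (S k (Ydiff k u))" using S_S_act_one by auto
  also have "\<dots> = - S k u" using SDu linear_neg[OF linear_S[OF k]] by simp
  finally have Du: "Ydiff k u = - S k u" .
  have "Ydiff k (S k u) = - S k (Ydiff k u) - u - u"
    unfolding Ydiff_def using S_Y_range_one[OF u]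
    by (simp add: linear_diff[OF linear_S[OF k]] algebra_simps)
  then have "Ydiff k (S k u) = - u" using SDu by simp
  then show ?thesis using Du linear_neg[OF linear_Ydiff] by simp
qed

end

end

end

lemma Y_succ_eigen_if_labels_differ:
  assumes a: "a \<in> Seq r t" and k: "k \<in> {1..<r + t}" and e: "ent a k \<noteq> ent a (k + 1)"
    and sum_ne_0: "i k + i (k + 1) \<noteq> 0"
    and hyp: "\<forall>v\<in>gen_eig (r + t) scl act Y (swp k a) (swpv k i). Y k v - scl (i (k + 1)) v = 0"
    and v: "v \<in> gen_eig (r + t) scl act Y a i"
  shows "Y (k + 1) v - scl (i (k + 1)) v = 0"
proof -
  have k1: "k \<in> {1..r + t}" "k + 1 \<in> {1..r + t}" using k by auto
  define w where "w = Yminus (k + 1) (i (k + 1)) v"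
  obtain x where "v = act (d_one a) x" using v unfolding gen_eig_def by blast
  then have "w \<in> range (act (d_one a))" and "Phi_hat k v \<in> range (act (d_one (swp k a)))"
    unfolding w_def using Yminus_act_one[OF k1(2) a] Phi_hat_act_one[OF k a e] by auto
  moreover have "Phi_hat k w = 0"
    unfolding w_def using intertwiner_Yminus_succ_eq_0[OF k linear_Phi_hat[OF k] subspace_UNIV _ _ hyp v]
      Y_Phi_hat[OF k] \<open>Phi_hat k v \<in> _\<close> by blast
  ultimately have "Ysum k w = 0" using Ysum_eq_0_if_Phi_hat_eq_0[OF k a e] by blast
  then have eigen: "Yminus k (i k) w + Yminus (k + 1) (i (k + 1)) w = scl (- (i k + i (k + 1))) w"
    unfolding Ysum_def Yminus_def by (simp add: algebra_simps scale_left_distrib)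
  obtain N where "(Yminus k (i k) ^^ N) w = 0" "(Yminus (k + 1) (i (k + 1)) ^^ N) w = 0"
    using gen_eig_Yminus_succ_nilpotent[OF v k] unfolding w_def by blast
  moreover have "- (i k + i (k + 1)) \<noteq> 0" using sum_ne_0 by (metis neg_equal_0_iff_equal)
  ultimately have "w = 0"
    using commuting_nilpotent_add_eigenvector_eq_0[OF linear_Yminus[OF k1(1)] linear_Yminus[OF k1(2)]
        Yminus_commute[OF k1] _ _ eigen] by blast
  then show ?thesis unfolding w_def Yminus_def .
qed

lemma Y_succ_eigen_if_labels_equal:
  assumes a: "a \<in> Seq r t" and k: "k \<in> {1..<r + t}" and e: "ent a k = ent a (k + 1)"
    and ne: "i (k + 1) \<notin> {i k, i k + 1, i k - 1}"
    and hyp: "\<forall>v\<in>gen_eig (r + t) scl act Y a (swpv k i). Y k v - scl (i (k + 1)) v = 0"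
    and v: "v \<in> gen_eig (r + t) scl act Y a i"
  shows "Y (k + 1) v - scl (i (k + 1)) v = 0"
proof -
  have k1: "k \<in> {1..r + t}" "k + 1 \<in> {1..r + t}" using k by auto
  let ?R = "range (act (d_one a))" and ?A = "Yminus k (i k)" and ?B = "Yminus (k + 1) (i (k + 1))"
  define w where "w = ?B v"
  have R: "subspace ?R" using linear_subspace_image[OF linear_act[OF d_one_in_Br[OF a]] subspace_UNIV] .
  have "v \<in> ?R" using v unfolding gen_eig_def by blast
  then have "w \<in> ?R" "Phi k v \<in> ?R"
    unfolding w_def Yminus_def using Y_range_one[OF k1(2) a] R Phi_range_one[OF k a e]
    by (auto simp: subspace_diff subspace_scale)
  moreover have "Phi k w = 0"
    unfolding w_def
    using intertwiner_Yminus_succ_eq_0[OF k linear_Phi[OF k] R Y_range_one[OF _ a] Y_Phi[OF k a e] hyp v]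
      \<open>v \<in> ?R\<close> \<open>Phi k v \<in> ?R\<close> by blast
  ultimately have square: "Ydiff k (Ydiff k w) = w" using Ydiff_square_if_Phi_eq_0[OF k a e] by blast
  obtain N where nilA: "(?A ^^ N) w = 0" and nilB: "(?B ^^ N) w = 0"
    using gen_eig_Yminus_succ_nilpotent[OF v k] unfolding w_def by blast
  have D_eq: "Ydiff k = (\<lambda>x. ?A x - ?B x + scl (i k - i (k + 1)) x)"
    unfolding Ydiff_def Yminus_def by (simp add: scale_left_diff_distrib)
  have "i k - i (k + 1) \<noteq> 1" "i k - i (k + 1) \<noteq> - 1"
    using ne by (auto simp: diff_eq_eq)
  then have "w = 0"
    by (rule commuting_nilpotent_square_one_eq_0[OF linear_Yminus[OF k1(1)] linear_Yminus[OF k1(2)]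
          Yminus_commute[OF k1] nilA nilB D_eq square])
  then show ?thesis unfolding w_def Yminus_def .
qed

end

theorem lemma3p4:
  fixes r t :: nat and \<omega> :: "nat \<Rightarrow> complex"
    and scl :: "complex \<Rightarrow> 'v::ab_group_add \<Rightarrow> 'v"
    and act :: "diag \<Rightarrow> 'v \<Rightarrow> 'v" and Y :: "nat \<Rightarrow> 'v \<Rightarrow> 'v"
    and a :: "bool list" and i :: "nat \<Rightarrow> complex" and k :: nat
  assumes M: "VBr_module r t \<omega> scl act Y"
    and a: "a \<in> Seq r t"
    and k: "k \<in> {1..<r + t}"
    and cases:
      "(ent a k = ent a (k + 1) \<and> i (k + 1) \<notin> {i k, i k + 1, i k - 1} \<and>
          (\<forall>v\<in>gen_eig (r + t) scl act Y a (swpv k i). Y k v - scl (i (k + 1)) v = 0))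
       \<or> (ent a k \<noteq> ent a (k + 1) \<and> i k + i (k + 1) \<noteq> 0 \<and>
          (\<forall>v\<in>gen_eig (r + t) scl act Y (swp k a) (swpv k i). Y k v - scl (i (k + 1)) v = 0))"
  shows "\<forall>v\<in>gen_eig (r + t) scl act Y a i. Y (k + 1) v - scl (i (k + 1)) v = 0"
proof -
  interpret VBr_rep r t \<omega> scl act Y by (rule VBr_rep.intro) (rule M)
  show ?thesis
    using cases Y_succ_eigen_if_labels_equal[OF a k] Y_succ_eigen_if_labels_differ[OF a k] by blast
qed

end
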